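(* Fix $\epsilon>0$, an integer $d\ge2$ and a polynomial $g(x)\in\mathbb Z[x]$ of degree $d$. There exists $\eta>0$, depending only on $\epsilon,g,d$, such that for any positive integer $q$ and any interval $I$ of length $N\ge q^{1/d+\epsilon}$, $$\Big|\sum_{n\in I}e\Big(\frac{g(n)}{q}\Big)\Big|\ll\frac{N}{q^{\eta}},$$ where the implied constant depends only on $\epsilon,d,g$.
   Context: $e(x)=e^{2\pi i x}$; the sum is over integers $n\in I$. *)

theory Defs
  imports "HOL-Analysis.Analysis" "HOL-Computational_Algebra.Polynomial"
begin

definition e :: "real \<Rightarrow> complex" where
  "e x = exp (2 * of_real pi * \<i> * of_real x)"

end

theory Submission
  imports Defs
begin

(*
  Write j = d - 1 and let c be the leading coefficient of g. Weyl differencing,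
  |S(p)|^2 <= sum over |h| < H of |S(p(x + h) - p(x))|, applied j times together with
  Cauchy-Schwarz bounds |S|^(2^j), for an interval of length H, by (2H)^(2^j-j-1) times
  the sum over all tuples of shifts |h_i| < H of min(H, 1/|sin(pi m/q)|), where
  m = (j+1)! h_1 ... h_j c is the slope of the linear polynomial left over. Tuples with
  some h_i = 0 contribute O(H^j). By the divisor bound every nonzero m arises from
  H^o(1) tuples, so the other tuples are controlled by the number of |m| <= (j+1)! |c| H^j
  with |sin(pi m/q)| < q^(eps/4)/H; counting in residue classes mod q shows that it is
  small as soon as q^(1/d+eps) <= 2H <= 4q. This gives |S| << H q^(-eps/2^(j+2)) on
  such intervals, and longer intervals are cut into blocks of length between q and 2q.
*)

lemma e_add: "e (x + y) = e x * e y"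
  unfolding e_def by (simp add: exp_add[symmetric] algebra_simps)

lemma norm_e [simp]: "norm (e x) = 1"
  unfolding e_def by (simp add: norm_exp_i_times[of "2 * pi * x", simplified mult_ac] mult_ac)

lemma e_uminus: "e (- x) = cnj (e x)"
  unfolding e_def by (simp add: exp_cnj)

lemma e_diff: "e (x - y) = e x * cnj (e y)"
  using e_add[of x "-y"] by (simp add: e_uminus)

lemma e_of_nat_mult: "e (real n * x) = e x ^ n"
  unfolding e_def by (simp add: exp_of_nat_mult[symmetric] mult_ac)

lemma norm_e_minus_one: "norm (e x - 1) = 2 * \<bar>sin (pi * x)\<bar>"
  unfolding e_def using dist_exp_i_1[of "2 * pi * x"] by (simp add: dist_norm mult_ac)

section \<open>Weyl differencing\<close>

definition poly_diff :: "'a \<Rightarrow> 'a::comm_ring_1 poly \<Rightarrow> 'a poly" where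
  "poly_diff h p = p \<circ>\<^sub>p [:h, 1:] - p"

lemma poly_poly_diff [simp]: "poly (poly_diff h p) x = poly p (x + h) - poly p x"
  unfolding poly_diff_def by (simp add: poly_pcompose algebra_simps)

lemma poly_diff_pCons: "poly_diff h (pCons a p) = pCons 0 (poly_diff h p) + smult h (p \<circ>\<^sub>p [:h, 1:])"
  by (simp add: poly_diff_def pcompose_pCons algebra_simps)

lemma coeff_pcompose_shift:
  fixes p :: "'a::idom poly"
  assumes "degree p \<le> n"
  shows "coeff (p \<circ>\<^sub>p [:h, 1:]) n = coeff p n"
proof (cases "degree p = n")
  case True
  then show ?thesis
    using degree_pcompose[of p "[:h, 1:]"] lead_coeff_comp[of "[:h, 1:]" p] by simp
next
  case False
  with assms show ?thesis by (simp add: coeff_eq_0 degree_pcompose)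
qed

lemma degree_coeff_poly_diff:
  fixes p :: "'a::idom poly"
  assumes "degree p \<le> Suc k"
  shows "degree (poly_diff h p) \<le> k \<and> coeff (poly_diff h p) k = of_nat (Suc k) * h * coeff p (Suc k)"
  using assms
proof (induction k arbitrary: p)
  case 0
  obtain a p' where p: "p = pCons a p'" by (cases p) auto
  have "degree p' = 0" using 0 p by (cases "p' = 0") auto
  then obtain b where "p' = [:b:]" by (metis degree_eq_zeroE)
  with p show ?case by (simp add: poly_diff_def pcompose_pCons)
next
  case (Suc k)
  obtain a p' where p: "p = pCons a p'" by (cases p) auto
  have deg_p': "degree p' \<le> Suc k" using Suc.prems p by (cases "p' = 0") auto
  note IH = Suc.IH[OF deg_p']
  have "degree (pCons 0 (poly_diff h p')) \<le> Suc k"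
    using IH by (metis degree_pCons_le le_trans Suc_le_mono)
  moreover have "degree (smult h (p' \<circ>\<^sub>p [:h, 1:])) \<le> Suc k"
    using deg_p' degree_smult_le[of h "p' \<circ>\<^sub>p [:h, 1:]"] by (simp add: degree_pcompose)
  ultimately have "degree (poly_diff h p) \<le> Suc k"
    unfolding p poly_diff_pCons by (meson degree_add_le)
  moreover have "coeff (poly_diff h p) (Suc k) = of_nat (Suc (Suc k)) * h * coeff p (Suc (Suc k))"
    unfolding p poly_diff_pCons using IH coeff_pcompose_shift[OF deg_p', of h]
    by (simp add: algebra_simps)
  ultimately show ?case by simp
qed

definition shift_range :: "nat \<Rightarrow> int set" where
  "shift_range H = {1 - int H .. int H - 1}"

lemma finite_shift_range [simp]: "finite (shift_range H)"
  by (simp add: shift_range_def)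

lemma card_shift_range_le: "card (shift_range H) \<le> 2 * H"
  by (simp add: shift_range_def)

definition weyl_sum :: "nat \<Rightarrow> int poly \<Rightarrow> int set \<Rightarrow> complex" where
  "weyl_sum q p I = (\<Sum>n\<in>I. e (of_int (poly p n) / real q))"

lemma norm_weyl_sum_le_card: "norm (weyl_sum q p I) \<le> card I"
  unfolding weyl_sum_def
  using norm_sum[of "\<lambda>n. e (of_int (poly p n) / real q)" I] by simp

text \<open>The case split is needed because \<open>1 / 0 = 0\<close>.\<close>
definition linear_sum_bound :: "nat \<Rightarrow> nat \<Rightarrow> int \<Rightarrow> real" where
  "linear_sum_bound q H m =
     (if sin (pi * m / q) = 0 then H else min H (1 / \<bar>sin (pi * m / q)\<bar>))"

lemma norm_geometric_sum_e_le:
  assumes "sin (pi * \<beta>) \<noteq> 0"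
  shows "norm (\<Sum>i<L. e \<beta> ^ i) \<le> 1 / \<bar>sin (pi * \<beta>)\<bar>"
proof -
  have ne: "e \<beta> \<noteq> 1" using assms norm_e_minus_one[of \<beta>] by auto
  have "norm (e \<beta> ^ L - 1) \<le> 2"
    using norm_triangle_ineq4[of "e \<beta> ^ L" 1] by (simp add: norm_power)
  then have "norm (e \<beta> ^ L - 1) / norm (e \<beta> - 1) \<le> 2 / (2 * \<bar>sin (pi * \<beta>)\<bar>)"
    unfolding norm_e_minus_one by (rule divide_right_mono) simp
  then show ?thesis
    using geometric_sum[OF ne, of L] by (simp add: norm_divide)
qed

lemma norm_weyl_sum_linear_le:
  assumes "degree p \<le> 1" and "hi - lo < int H"
  shows "norm (weyl_sum q p {lo..hi}) \<le> linear_sum_bound q H (coeff p 1)"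
proof -
  define \<beta> where "\<beta> = coeff p 1 / real q"
  have "norm (weyl_sum q p {lo..hi}) \<le> 1 / \<bar>sin (pi * \<beta>)\<bar>" if sin: "sin (pi * \<beta>) \<noteq> 0"
  proof -
    define L where "L = nat (hi - lo + 1)"
    have linear: "poly p n = coeff p 0 + coeff p 1 * n" for n
      using assms(1) by (cases p rule: pCons_cases)
        (auto simp: degree_pCons_eq_if split: if_splits elim!: degree_eq_zeroE)
    have "weyl_sum q p {lo..hi} = (\<Sum>i<L. e (of_int (poly p (lo + int i)) / real q))"
      unfolding weyl_sum_def L_def
      by (rule sum.reindex_bij_witness[of _ "\<lambda>i. lo + int i" "\<lambda>n. nat (n - lo)"]) auto
    also have "\<dots> = e (of_int (poly p lo) / real q) * (\<Sum>i<L. e \<beta> ^ i)"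
      unfolding sum_distrib_left
      by (intro sum.cong refl)
        (simp add: linear \<beta>_def e_add[symmetric] e_of_nat_mult[symmetric] add_divide_distrib algebra_simps)
    finally show ?thesis
      using norm_geometric_sum_e_le[OF sin] by (simp add: norm_mult)
  qed
  moreover have "norm (weyl_sum q p {lo..hi}) \<le> H"
    using norm_weyl_sum_le_card[of q p "{lo..hi}"] assms(2) by simp
  ultimately show ?thesis
    unfolding linear_sum_bound_def \<beta>_def by auto
qed

lemma sum_square_by_difference:
  assumes "hi - lo < int H"
  shows "(\<Sum>n\<in>{lo..hi}. \<Sum>m\<in>{lo..hi}. F n m) =
         (\<Sum>h\<in>shift_range H. \<Sum>m\<in>{max lo (lo - h)..min hi (hi - h)}. F (m + h) m)"
proof -
  have "(\<Sum>n\<in>{lo..hi}. \<Sum>m\<in>{lo..hi}. F n m) = (\<Sum>(n, m)\<in>{lo..hi} \<times> {lo..hi}. F n m)"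
    by (simp add: sum.cartesian_product)
  also have "\<dots> = (\<Sum>(h, m)\<in>Sigma (shift_range H) (\<lambda>h. {max lo (lo - h)..min hi (hi - h)}). F (m + h) m)"
    by (rule sum.reindex_bij_witness[of _ "\<lambda>(h, m). (m + h, m)" "\<lambda>(n, m). (n - m, m)"])
       (use assms in \<open>auto simp: shift_range_def\<close>)
  also have "\<dots> = (\<Sum>h\<in>shift_range H. \<Sum>m\<in>{max lo (lo - h)..min hi (hi - h)}. F (m + h) m)"
    by (subst sum.Sigma) auto
  finally show ?thesis .
qed

lemma norm_weyl_sum_squared_le:
  assumes "hi - lo < int H"
  shows "norm (weyl_sum q p {lo..hi}) ^ 2 \<le>
         (\<Sum>h\<in>shift_range H. norm (weyl_sum q (poly_diff h p) {max lo (lo - h)..min hi (hi - h)}))"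
proof -
  define f where "f n = e (of_int (poly p n) / real q)" for n
  have "complex_of_real (norm (weyl_sum q p {lo..hi}) ^ 2)
          = weyl_sum q p {lo..hi} * cnj (weyl_sum q p {lo..hi})"
    by (rule complex_norm_square)
  also have "\<dots> = (\<Sum>n\<in>{lo..hi}. \<Sum>m\<in>{lo..hi}. f n * cnj (f m))"
    unfolding weyl_sum_def f_def by (simp add: sum_product cnj_sum)
  also have "\<dots> = (\<Sum>h\<in>shift_range H. \<Sum>m\<in>{max lo (lo - h)..min hi (hi - h)}. f (m + h) * cnj (f m))"
    by (rule sum_square_by_difference[OF assms])
  also have "\<dots> = (\<Sum>h\<in>shift_range H. weyl_sum q (poly_diff h p) {max lo (lo - h)..min hi (hi - h)})"
    unfolding weyl_sum_def f_def
    by (intro sum.cong refl) (simp add: e_diff[symmetric] diff_divide_distrib)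
  finally have "norm (weyl_sum q p {lo..hi}) ^ 2 =
      norm (\<Sum>h\<in>shift_range H. weyl_sum q (poly_diff h p) {max lo (lo - h)..min hi (hi - h)})"
    by (metis norm_of_real abs_power2)
  then show ?thesis by (simp add: norm_sum)
qed

lemma sum_power_two_pow_le:
  fixes x :: "'a \<Rightarrow> real"
  assumes "\<And>i. i \<in> A \<Longrightarrow> x i \<ge> 0"
  shows "(\<Sum>i\<in>A. x i) ^ 2 ^ j \<le> real (card A) ^ (2 ^ j - 1) * (\<Sum>i\<in>A. x i ^ 2 ^ j)"
  using assms
proof (induction j arbitrary: x)
  case (Suc j)
  have "2 ^ Suc j - 1 = 2 ^ j + (2 ^ j - (1::nat))"
    by simp
  then have exp: "real (card A) ^ (2 ^ Suc j - 1) = real (card A) ^ 2 ^ j * real (card A) ^ (2 ^ j - 1)"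
    by (simp only: power_add)
  have "(\<Sum>i\<in>A. x i) ^ 2 ^ Suc j = ((\<Sum>i\<in>A. x i)\<^sup>2) ^ 2 ^ j"
    by (simp add: power_mult[symmetric] mult.commute)
  also have "\<dots> \<le> ((\<Sum>i\<in>A. (x i)\<^sup>2) * card A) ^ 2 ^ j"
    by (intro power_mono sum_squared_le_sum_of_squares) simp
  also have "\<dots> = card A ^ 2 ^ j * (\<Sum>i\<in>A. (x i)\<^sup>2) ^ 2 ^ j"
    by (simp add: power_mult_distrib)
  also have "\<dots> \<le> card A ^ 2 ^ j * (card A ^ (2 ^ j - 1) * (\<Sum>i\<in>A. ((x i)\<^sup>2) ^ 2 ^ j))"
    using Suc.IH[of "\<lambda>i. (x i)\<^sup>2"] by (intro mult_left_mono) auto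
  also have "\<dots> = real (card A) ^ (2 ^ Suc j - 1) * (\<Sum>i\<in>A. x i ^ 2 ^ Suc j)"
    unfolding exp by (simp add: power_mult[symmetric] mult.commute[of 2] mult.assoc)
  finally show ?case .
qed simp

text \<open>
  \<open>differencing_sum H j c \<phi>\<close> is the sum of \<open>\<phi> ((j + 1)! * h\<^sub>1 * \<dots> * h\<^sub>j * c)\<close> over
  all \<open>h\<^sub>i \<in> shift_range H\<close>; by \<open>degree_coeff_poly_diff\<close> these arguments are the
  linear coefficients of the \<open>j\<close>-fold differences of a polynomial of degree \<open>j + 1\<close>
  with leading coefficient \<open>c\<close>.\<close>
fun differencing_sum :: "nat \<Rightarrow> nat \<Rightarrow> int \<Rightarrow> (int \<Rightarrow> real) \<Rightarrow> real" where
  "differencing_sum H 0 c \<phi> = \<phi> c"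
| "differencing_sum H (Suc j) c \<phi> = (\<Sum>h\<in>shift_range H. differencing_sum H j (int (j + 2) * h * c) \<phi>)"

lemma norm_weyl_sum_power_le:
  assumes "degree p \<le> Suc j" and "hi - lo < int H"
  shows "norm (weyl_sum q p {lo..hi}) ^ 2 ^ j
           \<le> (2 * real H) ^ (2 ^ j - j - 1) * differencing_sum H j (coeff p (Suc j)) (linear_sum_bound q H)"
  using assms
proof (induction j arbitrary: p lo hi)
  case 0
  then show ?case using norm_weyl_sum_linear_le by simp
next
  case (Suc j)
  define c where "c = coeff p (Suc (Suc j))"
  define I where "I h = {max lo (lo - h)..min hi (hi - h)}" for h
  define K where "K = (2 * real H) ^ (2 ^ j - j - 1)"
  have IH: "norm (weyl_sum q (poly_diff h p) (I h)) ^ 2 ^ j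
              \<le> K * differencing_sum H j (int (j + 2) * h * c) (linear_sum_bound q H)" for h
    using Suc.IH[of "poly_diff h p"] degree_coeff_poly_diff[OF Suc.prems(1), of h] Suc.prems(2)
    unfolding I_def K_def c_def by (simp add: mult_ac)
  have "2 ^ Suc j - Suc j - 1 = (2 ^ j - 1) + (2 ^ j - j - (1::nat))"
    using less_exp[of j] unfolding power_Suc by linarith
  then have exp: "(2 * real H) ^ (2 ^ Suc j - Suc j - 1) = (2 * real H) ^ (2 ^ j - 1) * K"
    unfolding K_def by (simp only: power_add)
  have card_pow: "real (card (shift_range H)) ^ (2 ^ j - 1) \<le> (2 * real H) ^ (2 ^ j - 1)"
    using card_shift_range_le[of H] by (intro power_mono) auto
  have "norm (weyl_sum q p {lo..hi}) ^ 2 ^ Suc j = (norm (weyl_sum q p {lo..hi}) ^ 2) ^ 2 ^ j"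
    by (simp add: power_mult[symmetric])
  also have "\<dots> \<le> (\<Sum>h\<in>shift_range H. norm (weyl_sum q (poly_diff h p) (I h))) ^ 2 ^ j"
    using norm_weyl_sum_squared_le[OF Suc.prems(2)] unfolding I_def by (intro power_mono) auto
  also have "\<dots> \<le> real (card (shift_range H)) ^ (2 ^ j - 1)
                   * (\<Sum>h\<in>shift_range H. norm (weyl_sum q (poly_diff h p) (I h)) ^ 2 ^ j)"
    by (rule sum_power_two_pow_le) simp
  also have "\<dots> \<le> (2 * real H) ^ (2 ^ j - 1)
                   * (\<Sum>h\<in>shift_range H.
                        K * differencing_sum H j (int (j + 2) * h * c) (linear_sum_bound q H))"
    by (rule mult_mono[OF card_pow sum_mono[OF IH]]) (auto intro: sum_nonneg)
  also have "\<dots> = (2 * real H) ^ (2 ^ Suc j - Suc j - 1)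
                   * differencing_sum H (Suc j) c (linear_sum_bound q H)"
    unfolding exp by (simp add: sum_distrib_left mult_ac)
  finally show ?case unfolding c_def .
qed

lemma differencing_sum_mono:
  "(\<And>x. \<phi> x \<le> \<psi> x) \<Longrightarrow> differencing_sum H j c \<phi> \<le> differencing_sum H j c \<psi>"
  by (induction j arbitrary: c) (auto intro: sum_mono)

lemma differencing_sum_add:
  "differencing_sum H j c (\<lambda>x. \<phi> x + \<psi> x) = differencing_sum H j c \<phi> + differencing_sum H j c \<psi>"
  by (induction j arbitrary: c) (auto simp: sum.distrib)

lemma differencing_sum_cmult:
  "differencing_sum H j c (\<lambda>x. a * \<phi> x) = a * differencing_sum H j c \<phi>"
  by (induction j arbitrary: c) (auto simp: sum_distrib_left)

lemma differencing_sum_const: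
  "differencing_sum H j c (\<lambda>_. a) = real (card (shift_range H)) ^ j * a"
  by (induction j arbitrary: c) (auto simp: algebra_simps)

lemma differencing_sum_zero:
  "differencing_sum H j 0 \<phi> = real (card (shift_range H)) ^ j * \<phi> 0"
  by (induction j) (auto simp: algebra_simps)

lemma differencing_sum_indicator_zero_le:
  assumes "c \<noteq> 0"
  shows "differencing_sum H j c (\<lambda>x. if x = 0 then 1 else 0) \<le> j * (2 * real H) ^ (j - 1)"
  using assms
proof (induction j arbitrary: c)
  case (Suc j)
  define A :: real where "A = (2 * real H) ^ j"
  define B :: real where "B = j * (2 * real H) ^ (j - 1)"
  have B_nonneg: "B \<ge> 0" by (simp add: B_def)
  have term_le: "differencing_sum H j (int (j + 2) * h * c) (\<lambda>x. if x = 0 then 1 else 0)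
                   \<le> (if h = 0 then A else 0) + B" for h
  proof (cases "h = 0")
    case True
    have "real (card (shift_range H)) ^ j \<le> (2 * real H) ^ j"
      using card_shift_range_le[of H] by (intro power_mono) auto
    with True B_nonneg show ?thesis by (simp add: differencing_sum_zero A_def)
  next
    case False
    with Suc show ?thesis by (simp add: B_def)
  qed
  have "differencing_sum H (Suc j) c (\<lambda>x. if x = 0 then 1 else 0)
          \<le> (\<Sum>h\<in>shift_range H. (if h = 0 then A else 0) + B)"
    unfolding differencing_sum.simps by (rule sum_mono, rule term_le)
  also have "\<dots> = (if 0 \<in> shift_range H then A else 0) + card (shift_range H) * B"
    by (simp add: sum.distrib)
  also have "\<dots> \<le> A + 2 * real H * B"
    using card_shift_range_le[of H] B_nonneg
    by (intro add_mono mult_right_mono) (auto simp: A_def)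
  also have "\<dots> = Suc j * (2 * real H) ^ (Suc j - 1)"
    by (cases j) (auto simp: A_def B_def algebra_simps)
  finally show ?case .
qed simp

lemma abs_shift_multiple_le:
  assumes "h \<in> shift_range H"
  shows "\<bar>int (j + 2) * h * c\<bar> * int (fact (Suc j) * H ^ j) \<le> \<bar>c\<bar> * int (fact (Suc (Suc j)) * H ^ Suc j)"
proof -
  have "\<bar>int (j + 2) * h * c\<bar> \<le> int (j + 2) * int H * \<bar>c\<bar>"
    using assms by (auto simp: abs_mult shift_range_def intro!: mult_right_mono)
  then have "\<bar>int (j + 2) * h * c\<bar> * int (fact (Suc j) * H ^ j)
               \<le> int (j + 2) * int H * \<bar>c\<bar> * int (fact (Suc j) * H ^ j)"
    by (rule mult_right_mono) simp
  also have "\<dots> = \<bar>c\<bar> * int (fact (Suc (Suc j)) * H ^ Suc j)"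
    by (simp add: algebra_simps)
  finally show ?thesis .
qed

lemma sum_shift_range_multiple_dvd_le:
  fixes \<phi> :: "int \<Rightarrow> real"
  assumes "\<phi> m \<ge> 0" and "m = 0 \<Longrightarrow> \<phi> m = 0"
    and "m \<noteq> 0 \<Longrightarrow> real (card {h \<in> shift_range H. h \<noteq> 0 \<and> h dvd m}) \<le> D"
  shows "(\<Sum>h\<in>shift_range H. if k * h * c dvd m then \<phi> m else 0) \<le> D * (if c dvd m then \<phi> m else 0)"
proof (cases "m = 0")
  case False
  have "card {h \<in> shift_range H. k * h * c dvd m} \<le> card {h \<in> shift_range H. h \<noteq> 0 \<and> h dvd m}"
    using False by (intro card_mono) (auto simp: shift_range_def dest: dvd_mult_left)
  also have "\<dots> \<le> D" using assms(3) False by simp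
  finally have le: "card {h \<in> shift_range H. k * h * c dvd m} * \<phi> m \<le> D * \<phi> m"
    using assms(1) by (intro mult_right_mono) auto
  show ?thesis
  proof (cases "c dvd m")
    case False
    then have "{h \<in> shift_range H. k * h * c dvd m} = {}"
      using dvd_trans[of c _ m] by auto
    with False show ?thesis by (simp add: sum.If_cases Int_def)
  qed (use le in \<open>simp add: sum.If_cases Int_def\<close>)
qed (use assms(2) in simp)

lemma differencing_sum_le_divisor_sum:
  assumes nonneg: "\<And>x. \<phi> x \<ge> 0" and zero: "\<phi> 0 = 0" and "D \<ge> 0"
    and divisors: "\<And>m. m \<noteq> 0 \<Longrightarrow> \<bar>m\<bar> \<le> B \<Longrightarrow> real (card {h \<in> shift_range H. h \<noteq> 0 \<and> h dvd m}) \<le> D"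
    and "\<bar>c\<bar> * int (fact (Suc j) * H ^ j) \<le> B"
  shows "differencing_sum H j c \<phi> \<le> D ^ j * (\<Sum>m\<in>{-B..B}. if c dvd m then \<phi> m else 0)"
  using assms(5)
proof (induction j arbitrary: c)
  case 0
  show ?case
  proof (cases "c = 0")
    case True
    then show ?thesis using zero nonneg by (simp add: sum_nonneg)
  next
    case False
    with 0 have "c \<in> {-B..B}" by auto
    then show ?thesis
      using nonneg member_le_sum[of c "{-B..B}" "\<lambda>m. if c dvd m then \<phi> m else 0"] by simp
  qed
next
  case (Suc j)
  define ch where "ch h = int (j + 2) * h * c" for h
  have bound: "\<bar>ch h\<bar> * int (fact (Suc j) * H ^ j) \<le> B" if "h \<in> shift_range H" for h
    unfolding ch_def using abs_shift_multiple_le[OF that, of j c] Suc.prems by linarith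
  have count: "(\<Sum>h\<in>shift_range H. if ch h dvd m then \<phi> m else 0) \<le> D * (if c dvd m then \<phi> m else 0)"
    if "m \<in> {-B..B}" for m
    unfolding ch_def using nonneg zero divisors that by (intro sum_shift_range_multiple_dvd_le) auto
  have "differencing_sum H (Suc j) c \<phi> = (\<Sum>h\<in>shift_range H. differencing_sum H j (ch h) \<phi>)"
    by (simp add: ch_def)
  also have "\<dots> \<le> (\<Sum>h\<in>shift_range H. D ^ j * (\<Sum>m\<in>{-B..B}. if ch h dvd m then \<phi> m else 0))"
    by (intro sum_mono Suc.IH bound)
  also have "\<dots> = D ^ j * (\<Sum>m\<in>{-B..B}. \<Sum>h\<in>shift_range H. if ch h dvd m then \<phi> m else 0)"
    by (simp add: sum_distrib_left sum.swap[of _ "shift_range H"])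
  also have "\<dots> \<le> D ^ j * (\<Sum>m\<in>{-B..B}. D * (if c dvd m then \<phi> m else 0))"
    using \<open>D \<ge> 0\<close> by (intro mult_left_mono sum_mono count) auto
  also have "\<dots> = D ^ Suc j * (\<Sum>m\<in>{-B..B}. if c dvd m then \<phi> m else 0)"
    by (simp add: sum_distrib_left mult_ac)
  finally show ?case .
qed

section \<open>Integers with small \<open>\<bar>sin (pi * m / q)\<bar>\<close>\<close>

lemma sin_ge_third:
  fixes x :: real
  assumes "0 \<le> x" "x \<le> 2"
  shows "x / 3 \<le> sin x"
proof -
  have "\<bar>sin x - (\<Sum>m<3. sin_coeff m * x ^ m)\<bar> \<le> inverse (fact 3) * \<bar>x\<bar> ^ 3"
    by (rule Maclaurin_sin_bound)
  then have "x - x ^ 3 / 6 \<le> sin x"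
    using assms by (simp add: numeral_3_eq_3 sin_coeff_def fact_numeral abs_if split: if_splits)
  moreover have "x ^ 3 \<le> 4 * x"
    using mult_left_mono[OF power_mono[of x 2 2], of x] assms by (simp add: power3_eq_cube power2_eq_square)
  ultimately show ?thesis by linarith
qed

lemma abs_sin_add_pi_int: "\<bar>sin (x + pi * of_int k)\<bar> = \<bar>sin x\<bar>"
  by (simp add: sin_add abs_mult)

lemma abs_sin_pi_div_ge:
  assumes "q > 0"
  shows "min (m mod int q) (int q - m mod int q) / real q \<le> \<bar>sin (pi * m / q)\<bar>"
proof -
  define r where "r = m mod int q"
  define t where "t = min r (int q - r)"
  have r: "0 \<le> r" "r < int q" using assms by (auto simp: r_def)
  have t: "0 \<le> t" "2 * t \<le> int q" using r by (auto simp: t_def min_def)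
  have angle: "0 \<le> pi * t / q" "pi * t / q \<le> pi / 2"
    using t assms by (simp_all add: field_simps)
  have sin_nonneg: "0 \<le> sin (pi * t / q)"
    using angle pi_gt_zero by (intro sin_ge_zero) linarith+
  have "pi * m / q = pi * r / q + pi * of_int (m div int q)"
  proof -
    have "real_of_int m = real_of_int (m div int q) * real q + real_of_int r"
      unfolding r_def by (metis div_mult_mod_eq of_int_add of_int_mult of_int_of_nat_eq)
    with assms show ?thesis by (simp add: field_simps)
  qed
  then have "\<bar>sin (pi * m / q)\<bar> = \<bar>sin (pi * r / q)\<bar>"
    by (simp only: abs_sin_add_pi_int)
  also have "\<dots> = sin (pi * t / q)"
  proof (cases "t = r")
    case False
    then have "pi * r / q = pi - pi * t / q"
      using assms by (simp add: t_def min_def field_simps split: if_splits)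
    with sin_nonneg show ?thesis by simp
  qed (use sin_nonneg in simp)
  also have "pi * t / q / 3 \<le> \<dots>"
    using angle pi_less_4 by (intro sin_ge_third) linarith+
  moreover have "t / q \<le> pi * t / q / 3"
  proof -
    have "3 * real_of_int t \<le> pi * t" using pi_gt3 t by (intro mult_right_mono) auto
    with assms show ?thesis by (simp add: field_simps)
  qed
  ultimately show ?thesis unfolding t_def r_def by linarith
qed

lemma card_residues_near_zero_le:
  fixes q :: nat and s :: real
  assumes "s > 0"
  shows "card {r \<in> {0..<int q}. min r (int q - r) < s * q} \<le> 2 * s * q + 2"
proof -
  define k where "k = \<lceil>s * q\<rceil>"
  have "{r \<in> {0..<int q}. min r (int q - r) < s * q} \<subseteq> {0..<k} \<union> {int q - k + 1..<int q}"
    unfolding k_def by (auto simp: min_def split: if_splits) linarith+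
  then have "card {r \<in> {0..<int q}. min r (int q - r) < s * q} \<le> card ({0..<k} \<union> {int q - k + 1..<int q})"
    by (intro card_mono) auto
  also have "\<dots> \<le> nat k + nat k"
    using card_Un_le[of "{0..<k}" "{int q - k + 1..<int q}"] by simp
  finally have "card {r \<in> {0..<int q}. min r (int q - r) < s * q} \<le> 2 * real (nat k)"
    by linarith
  moreover have "real (nat k) \<le> s * q + 1"
    using assms unfolding k_def by (simp add: of_nat_nat)
  ultimately show ?thesis by linarith
qed

lemma card_quotient_range_le:
  fixes q :: nat and B :: int
  assumes "q > 0" "B \<ge> 0"
  shows "card {(-B) div int q .. B div int q} \<le> 2 * real_of_int B / q + 2"
proof -
  have "real_of_int (B div int q) \<le> B / q" "real_of_int ((-B) div int q) \<ge> - B / q - 1"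
    using floor_divide_of_int_eq[of B "int q", where 'a=real]
      floor_divide_of_int_eq[of "-B" "int q", where 'a=real] by linarith+
  moreover have "(-B) div int q \<le> B div int q"
    using assms by (intro zdiv_mono1) auto
  ultimately show ?thesis by simp
qed

lemma card_small_sin_le:
  fixes q :: nat and s :: real and B :: int
  assumes "q > 0" "s > 0" "B \<ge> 0"
  shows "card {m \<in> {-B..B}. \<bar>sin (pi * m / q)\<bar> < s} \<le> (2 * real_of_int B / q + 2) * (2 * s * q + 2)"
proof -
  define S where "S = {m \<in> {-B..B}. \<bar>sin (pi * m / q)\<bar> < s}"
  define Q where "Q = {(-B) div int q .. B div int q}"
  define A where "A = {r \<in> {0..<int q}. min r (int q - r) < s * q}"
  have finite_A: "finite A"
    by (rule finite_subset[of _ "{0..<int q}"]) (auto simp: A_def)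
  have maps_to: "(\<lambda>m. (m div int q, m mod int q)) ` S \<subseteq> Q \<times> A"
  proof safe
    fix m assume m: "m \<in> S"
    then show "m div int q \<in> Q"
      using assms(1) unfolding Q_def S_def by (auto intro: zdiv_mono1)
    have "min (m mod int q) (int q - m mod int q) / q < s"
      using abs_sin_pi_div_ge[OF assms(1), of m] m by (simp add: S_def)
    with assms(1) show "m mod int q \<in> A"
      by (simp add: A_def divide_less_eq mult.commute)
  qed
  have "inj_on (\<lambda>m. (m div int q, m mod int q)) S"
    by (rule inj_onI) (metis div_mult_mod_eq prod.inject)
  then have "card S = card ((\<lambda>m. (m div int q, m mod int q)) ` S)"
    by (simp add: card_image)
  also have "\<dots> \<le> card (Q \<times> A)"
    using maps_to by (intro card_mono finite_cartesian_product finite_A) (simp add: Q_def)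
  also have "\<dots> = card Q * card A"
    by (rule card_cartesian_product)
  finally have "real (card S) \<le> real (card Q) * real (card A)"
    by (metis of_nat_mono of_nat_mult)
  also have "\<dots> \<le> (2 * real_of_int B / q + 2) * (2 * s * q + 2)"
  proof (rule mult_mono)
    show "real (card Q) \<le> 2 * real_of_int B / q + 2"
      unfolding Q_def using assms(1,3) by (rule card_quotient_range_le)
    show "real (card A) \<le> 2 * s * q + 2"
      unfolding A_def by (rule card_residues_near_zero_le[OF assms(2)])
  qed (use assms in auto)
  finally show ?thesis unfolding S_def .
qed

section \<open>The divisor bound\<close>

lemma card_divisors_mult_le:
  fixes m n :: nat
  assumes "m > 0" "n > 0"
  shows "card {d. d dvd m * n} \<le> card {d. d dvd m} * card {d. d dvd n}"
proof -
  have fin: "finite {d. d dvd m}" "finite {d. d dvd n}"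
    using assms by (auto intro: finite_divisors_nat)
  have "{d. d dvd m * n} \<subseteq> (\<lambda>(a, b). a * b) ` ({d. d dvd m} \<times> {d. d dvd n})"
  proof
    fix d assume "d \<in> {d. d dvd m * n}"
    then obtain a b where "d = a * b" "a dvd m" "b dvd n"
      using division_decomp by blast
    then show "d \<in> (\<lambda>(a, b). a * b) ` ({d. d dvd m} \<times> {d. d dvd n})" by force
  qed
  then have "card {d. d dvd m * n} \<le> card ((\<lambda>(a, b). a * b) ` ({d. d dvd m} \<times> {d. d dvd n}))"
    using fin by (intro card_mono) auto
  also have "\<dots> \<le> card ({d. d dvd m} \<times> {d. d dvd n})"
    using fin by (intro card_image_le) auto
  finally show ?thesis by (simp add: card_cartesian_product)
qed

lemma card_divisors_prime_power_le:
  fixes p :: nat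
  assumes "prime p"
  shows "card {d. d dvd p ^ a} \<le> a + 1"
proof -
  have "{d. d dvd p ^ a} = (\<lambda>i. p ^ i) ` {0..a}"
    using divides_primepow_nat[OF assms] by auto
  then have "card {d. d dvd p ^ a} \<le> card {0..a}"
    by (metis card_image_le finite_atLeastAtMost)
  then show ?thesis by simp
qed

lemma card_divisors_prime_power_mult_le:
  fixes p m :: nat
  assumes "prime p" "m > 0"
  shows "card {d. d dvd p ^ a * m} \<le> (a + 1) * card {d. d dvd m}"
  using card_divisors_mult_le[of "p ^ a" m] card_divisors_prime_power_le[OF assms(1), of a]
    assms prime_gt_0_nat[OF assms(1)]
  by (metis mult_le_mono1 order_trans zero_less_power)

lemma Suc_le_two_powr:
  fixes \<rho> :: real
  assumes "\<rho> > 0"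
  shows "real a + 1 \<le> max 1 (1 / (\<rho> * ln 2)) * 2 powr (a * \<rho>)"
proof -
  define c where "c = \<rho> * ln 2"
  have "c > 0" using assms by (simp add: c_def)
  have "real a + 1 \<le> max 1 (1 / c) * (1 + a * c)"
  proof (cases "c \<ge> 1")
    case True
    then show ?thesis
      using mult_left_mono[of 1 c "real a"] \<open>c > 0\<close> by (simp add: max_def)
  next
    case False
    then show ?thesis using \<open>c > 0\<close> by (simp add: max_def field_simps)
  qed
  also have "\<dots> \<le> max 1 (1 / c) * 2 powr (a * \<rho>)"
    using exp_ge_add_one_self[of "a * c"] by (intro mult_left_mono) (simp_all add: c_def powr_def mult_ac)
  finally show ?thesis by (simp add: c_def)
qed

text \<open>
  The factor \<open>a + 1\<close> that a prime power \<open>p ^ a\<close> contributes to the divisor count is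
  absorbed by \<open>p powr (a * \<rho>)\<close> once \<open>p \<ge> 2 powr (1 / \<rho>)\<close>; each of the finitely many
  smaller primes costs a constant factor.\<close>
lemma Suc_le_prime_power_powr:
  fixes p :: nat and \<rho> :: real
  assumes "prime p" "\<rho> > 0"
  shows "real a + 1 \<le> (if p < 2 powr (1 / \<rho>) then max 1 (1 / (\<rho> * ln 2)) else 1) * p powr (a * \<rho>)"
proof (cases "p < 2 powr (1 / \<rho>)")
  case True
  have "real a + 1 \<le> max 1 (1 / (\<rho> * ln 2)) * 2 powr (a * \<rho>)"
    by (rule Suc_le_two_powr[OF assms(2)])
  also have "\<dots> \<le> max 1 (1 / (\<rho> * ln 2)) * p powr (a * \<rho>)"
    using prime_ge_2_nat[OF assms(1)] assms(2) by (intro mult_left_mono powr_mono2) auto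
  finally show ?thesis using True by simp
next
  case False
  have "real (Suc a) \<le> real (2 ^ a)"
    by (intro of_nat_mono Suc_leI less_exp)
  then have "real a + 1 \<le> 2 ^ a" by simp
  also have "\<dots> \<le> (p powr \<rho>) ^ a"
  proof (rule power_mono)
    have "(2 powr (1 / \<rho>)) powr \<rho> \<le> p powr \<rho>"
      using False assms(2) by (intro powr_mono2) auto
    then show "2 \<le> p powr \<rho>" using assms(2) by (simp add: powr_powr)
  qed simp
  also have "\<dots> = p powr (a * \<rho>)"
    using prime_gt_0_nat[OF assms(1)] by (simp add: powr_realpow[symmetric] powr_powr mult.commute)
  finally show ?thesis using False by simp
qed

lemma prime_divisors_prime_power_mult:
  fixes p m :: nat
  assumes "prime p" "a \<ge> 1"
  shows "{r. prime r \<and> r dvd p ^ a * m \<and> P r} = {r. prime r \<and> r dvd m \<and> P r} \<union> (if P p then {p} else {})"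
  using assms by (auto simp: prime_dvd_mult_iff prime_dvd_power_iff dest: primes_dvd_imp_eq)

lemma card_divisors_le_small_primes_powr:
  fixes \<rho> :: real and n :: nat
  assumes "\<rho> > 0" "n > 0"
  shows "card {d. d dvd n}
           \<le> max 1 (1 / (\<rho> * ln 2)) ^ card {p. prime p \<and> p dvd n \<and> p < 2 powr (1 / \<rho>)} * n powr \<rho>"
  using assms(2)
proof (induction n rule: less_induct)
  case (less n)
  define Bc where "Bc = max 1 (1 / (\<rho> * ln 2))"
  define small where "small k = {p. prime p \<and> p dvd k \<and> p < 2 powr (1 / \<rho>)}" for k :: nat
  have finite_small: "finite (small k)" if "k > 0" for k
    using that by (intro finite_subset[OF _ finite_divisors_nat[of k]]) (auto simp: small_def)
  show ?case
  proof (cases "n = 1")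
    case False
    then obtain p where p: "prime p" "p dvd n" using prime_factor_nat by blast
    have n_nonzero: "n \<noteq> 0" and p_not_unit: "\<not> is_unit p"
      using less.prems p(1) not_prime_unit by auto
    define a where "a = multiplicity p n"
    obtain m where n_eq: "n = p ^ a * m" and p_ndvd_m: "\<not> p dvd m"
      using multiplicity_decompose'[OF n_nonzero p_not_unit] unfolding a_def by blast
    have "a \<ge> 1"
      using multiplicity_gt_zero_iff[OF n_nonzero p_not_unit] p(2) by (simp add: a_def)
    then have "m < n" "m > 0"
      using less.prems n_eq prime_gt_1_nat[OF p(1)] one_less_power[of p a]
      by (auto intro: mult_le_less_imp_less[of 1 m])
    have "small n = small m \<union> (if p < 2 powr (1 / \<rho>) then {p} else {})"
      unfolding small_def n_eq using prime_divisors_prime_power_mult[OF p(1) \<open>a \<ge> 1\<close>] by simp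
    then have small_n: "Bc ^ card (small n) = (if p < 2 powr (1 / \<rho>) then Bc else 1) * Bc ^ card (small m)"
      using p_ndvd_m finite_small[OF \<open>m > 0\<close>] by (simp add: small_def)
    have n_powr: "real n powr \<rho> = p powr (a * \<rho>) * m powr \<rho>"
      unfolding n_eq using prime_gt_0_nat[OF p(1)]
      by (simp add: powr_mult powr_realpow[symmetric] powr_powr mult.commute)
    have "card {d. d dvd n} \<le> real ((a + 1) * card {d. d dvd m})"
      unfolding n_eq by (intro of_nat_mono card_divisors_prime_power_mult_le p(1) \<open>m > 0\<close>)
    also have "\<dots> = (real a + 1) * card {d. d dvd m}"
      by (simp add: algebra_simps)
    also have "\<dots> \<le> ((if p < 2 powr (1 / \<rho>) then Bc else 1) * p powr (a * \<rho>))
                     * (Bc ^ card (small m) * m powr \<rho>)"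
      using Suc_le_prime_power_powr[OF p(1) assms(1), of a] less.IH[OF \<open>m < n\<close> \<open>m > 0\<close>]
      unfolding Bc_def small_def by (intro mult_mono) auto
    also have "\<dots> = Bc ^ card (small n) * n powr \<rho>"
      unfolding small_n n_powr by (simp add: mult_ac)
    finally show ?thesis unfolding Bc_def small_def .
  qed simp
qed

lemma divisor_count_bound:
  fixes \<rho> :: real
  assumes "\<rho> > 0"
  obtains C where "C \<ge> 1" "\<And>n. n > 0 \<Longrightarrow> card {d. d dvd n} \<le> C * real n powr \<rho>"
proof
  define Bc where "Bc = max 1 (1 / (\<rho> * ln 2))"
  define K where "K = nat \<lceil>2 powr (1 / \<rho>)\<rceil>"
  show "Bc ^ K \<ge> 1" by (simp add: Bc_def)
  fix n :: nat assume "n > 0"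
  have "{p. prime p \<and> p dvd n \<and> p < 2 powr (1 / \<rho>)} \<subseteq> {..<K}"
    by (auto simp: K_def less_ceiling_iff) linarith
  then have "card {p. prime p \<and> p dvd n \<and> p < 2 powr (1 / \<rho>)} \<le> K"
    using card_mono[of "{..<K}"] by fastforce
  then have "Bc ^ card {p. prime p \<and> p dvd n \<and> p < 2 powr (1 / \<rho>)} \<le> Bc ^ K"
    by (intro power_increasing) (auto simp: Bc_def)
  with card_divisors_le_small_primes_powr[OF assms \<open>n > 0\<close>]
  show "card {d. d dvd n} \<le> Bc ^ K * n powr \<rho>"
    unfolding Bc_def by (meson mult_right_mono order_trans powr_ge_zero)
qed

lemma int_divisor_count_bound:
  fixes \<rho> :: real
  assumes "\<rho> > 0"
  obtains C where "C \<ge> 1" "\<And>m::int. m \<noteq> 0 \<Longrightarrow> card {h. h \<noteq> 0 \<and> h dvd m} \<le> C * \<bar>m\<bar> powr \<rho>"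
proof -
  obtain C where C: "C \<ge> 1" "\<And>n. n > 0 \<Longrightarrow> card {d. d dvd n} \<le> C * real n powr \<rho>"
    using divisor_count_bound[OF assms] by blast
  show thesis
  proof
    show "2 * C \<ge> 1" using C(1) by simp
    fix m :: int assume "m \<noteq> 0"
    define D where "D = {d. d dvd nat \<bar>m\<bar>}"
    have "finite D" unfolding D_def using \<open>m \<noteq> 0\<close> by (intro finite_divisors_nat) simp
    have "{h. h \<noteq> 0 \<and> h dvd m} \<subseteq> int ` D \<union> (\<lambda>d. - int d) ` D"
    proof
      fix h assume "h \<in> {h. h \<noteq> 0 \<and> h dvd m}"
      then have "nat \<bar>h\<bar> \<in> D"
        by (simp add: D_def flip: int_dvd_int_iff)
      moreover have "h = int (nat \<bar>h\<bar>) \<or> h = - int (nat \<bar>h\<bar>)" by linarith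
      ultimately show "h \<in> int ` D \<union> (\<lambda>d. - int d) ` D" by blast
    qed
    then have "card {h. h \<noteq> 0 \<and> h dvd m} \<le> card (int ` D \<union> (\<lambda>d. - int d) ` D)"
      using \<open>finite D\<close> by (intro card_mono) auto
    also have "\<dots> \<le> card D + card D"
      using card_Un_le[of "int ` D" "(\<lambda>d. - int d) ` D"] card_image_le[OF \<open>finite D\<close>, of int]
        card_image_le[OF \<open>finite D\<close>, of "\<lambda>d. - int d"] by linarith
    finally have "card {h. h \<noteq> 0 \<and> h dvd m} \<le> 2 * real (card D)" by linarith
    also have "\<dots> \<le> 2 * (C * \<bar>m\<bar> powr \<rho>)"
      using C(2)[of "nat \<bar>m\<bar>"] \<open>m \<noteq> 0\<close> by (simp add: D_def)
    finally show "card {h. h \<noteq> 0 \<and> h dvd m} \<le> 2 * C * \<bar>m\<bar> powr \<rho>" by simp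
  qed
qed

lemma linear_sum_bound_le_split:
  assumes "s > 0"
  shows "linear_sum_bound q H x
           \<le> H * (if x = 0 then 1 else 0)
             + H * (if x \<noteq> 0 \<and> \<bar>sin (pi * x / q)\<bar> < s then 1 else 0) + 1 / s"
proof -
  have "linear_sum_bound q H x \<le> H" by (simp add: linear_sum_bound_def)
  moreover have "linear_sum_bound q H x \<le> 1 / s" if "\<bar>sin (pi * x / q)\<bar> \<ge> s"
  proof -
    have "linear_sum_bound q H x \<le> 1 / \<bar>sin (pi * x / q)\<bar>"
      using that assms by (simp add: linear_sum_bound_def)
    also have "\<dots> \<le> 1 / s" using that assms by (intro divide_left_mono) auto
    finally show ?thesis .
  qed
  ultimately show ?thesis using assms by (auto simp: not_less intro: add_increasing2)
qed

lemma differencing_sum_linear_sum_bound_le: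
  assumes "q > 0" "s > 0" "c \<noteq> 0" "D \<ge> 0"
    and B_def: "B = \<bar>c\<bar> * int (fact (Suc j) * H ^ j)"
    and divisors: "\<And>m. m \<noteq> 0 \<Longrightarrow> \<bar>m\<bar> \<le> B \<Longrightarrow> real (card {h \<in> shift_range H. h \<noteq> 0 \<and> h dvd m}) \<le> D"
  shows "differencing_sum H j c (linear_sum_bound q H)
           \<le> H * (j * (2 * real H) ^ (j - 1))
             + H * (D ^ j * ((2 * real_of_int B / q + 2) * (2 * s * q + 2)))
             + (2 * real H) ^ j / s"
proof -
  define Z where "Z x = (if x = 0 then 1 else 0 :: real)" for x :: int
  define W where "W x = (if x \<noteq> 0 \<and> \<bar>sin (pi * x / q)\<bar> < s then 1 else 0 :: real)" for x :: int
  have "differencing_sum H j c (linear_sum_bound q H)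
          \<le> differencing_sum H j c (\<lambda>x. H * Z x + H * W x + 1 / s)"
    unfolding Z_def W_def by (intro differencing_sum_mono linear_sum_bound_le_split assms)
  also have "\<dots> = H * differencing_sum H j c Z + H * differencing_sum H j c W
                   + real (card (shift_range H)) ^ j * (1 / s)"
    by (simp add: differencing_sum_add differencing_sum_cmult differencing_sum_const)
  also have "\<dots> \<le> H * (j * (2 * real H) ^ (j - 1))
                   + H * (D ^ j * ((2 * real_of_int B / q + 2) * (2 * s * q + 2)))
                   + (2 * real H) ^ j * (1 / s)"
  proof (intro add_mono mult_left_mono mult_right_mono)
    show "differencing_sum H j c Z \<le> j * (2 * real H) ^ (j - 1)"
      unfolding Z_def by (rule differencing_sum_indicator_zero_le[OF assms(3)])
    have "B \<ge> 0" by (simp add: B_def)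
    have "differencing_sum H j c W \<le> D ^ j * (\<Sum>m\<in>{-B..B}. if c dvd m then W m else 0)"
      by (rule differencing_sum_le_divisor_sum[OF _ _ assms(4) divisors]) (auto simp: W_def B_def)
    also have "\<dots> \<le> D ^ j * (\<Sum>m\<in>{-B..B}. if \<bar>sin (pi * m / q)\<bar> < s then 1 else 0)"
      using assms(4) by (intro mult_left_mono sum_mono) (auto simp: W_def)
    also have "\<dots> = D ^ j * card {m \<in> {-B..B}. \<bar>sin (pi * m / q)\<bar> < s}"
      by (simp add: sum.If_cases Int_def)
    also have "\<dots> \<le> D ^ j * ((2 * real_of_int B / q + 2) * (2 * s * q + 2))"
      using assms \<open>B \<ge> 0\<close> by (intro mult_left_mono card_small_sin_le) auto
    finally show "differencing_sum H j c W \<le> D ^ j * ((2 * real_of_int B / q + 2) * (2 * s * q + 2))" .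
    show "real (card (shift_range H)) ^ j \<le> (2 * real H) ^ j"
      using card_shift_range_le[of H] by (intro power_mono) auto
  qed (use assms in auto)
  finally show ?thesis by simp
qed

lemma small_sine_term_le:
  fixes X Q t E \<kappa> Dj :: real
  assumes X: "X \<ge> 1" and t: "t \<ge> 1" and Q: "Q > 0"
    and t_X: "t ^ 4 \<le> 2 * X" and t_Q: "Q * t ^ 4 \<le> (2 * X) ^ Suc j" and X_Q: "X \<le> 2 * Q"
    and \<kappa>: "\<kappa> \<ge> 0" and Dj: "0 \<le> Dj" "Dj \<le> E * t\<^sup>2"
  shows "X * (Dj * ((2 * (\<kappa> * X ^ j) / Q + 2) * (2 * (t / X) * Q + 2))) * t
           \<le> (24 * E * \<kappa> + 12 * E * 2 ^ Suc j) * X ^ Suc j"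
proof -
  define A where "A = 2 * (\<kappa> * X ^ j) / Q + 2"
  have A: "A \<ge> 0" using \<kappa> X Q by (simp add: A_def)
  have "0 \<le> E * t\<^sup>2" using Dj by linarith
  then have E: "E \<ge> 0" using t by (simp add: zero_le_mult_iff)
  have AQ: "A * Q = 2 * \<kappa> * X ^ j + 2 * Q"
    using Q by (simp add: A_def distrib_right)
  have "X * (2 * (t / X) * Q + 2) = 2 * t * Q + 2 * X" using X by (simp add: field_simps)
  also have "\<dots> \<le> 6 * t * Q" using X_Q t Q mult_right_mono[of 1 t Q] by linarith
  finally have "X * (Dj * (A * (2 * (t / X) * Q + 2))) * t \<le> Dj * (A * (6 * t * Q)) * t"
    using Dj A t by (simp add: mult_ac mult_left_mono)
  also have "\<dots> \<le> E * t\<^sup>2 * (A * (6 * t * Q)) * t"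
    using Dj A t Q by (intro mult_right_mono) auto
  also have "\<dots> = 6 * E * t ^ 4 * (A * Q)"
    by (simp add: eval_nat_numeral mult_ac)
  also have "\<dots> = 12 * E * \<kappa> * (X ^ j * t ^ 4) + 12 * E * (Q * t ^ 4)"
    unfolding AQ by (simp add: algebra_simps)
  also have "\<dots> \<le> 12 * E * \<kappa> * (X ^ j * (2 * X)) + 12 * E * (2 * X) ^ Suc j"
    using E \<kappa> X t_X t_Q by (intro add_mono mult_left_mono) auto
  finally show ?thesis
    unfolding A_def by (simp add: power_mult_distrib algebra_simps)
qed

lemma differencing_terms_saving:
  fixes X Q t E \<kappa> Dj :: real
  assumes X: "X \<ge> 1" and t: "t \<ge> 1" and Q: "Q > 0" and j: "j \<ge> 1"
    and t_X: "t ^ 4 \<le> 2 * X" and t_Q: "Q * t ^ 4 \<le> (2 * X) ^ Suc j" and X_Q: "X \<le> 2 * Q"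
    and \<kappa>: "\<kappa> \<ge> 0" and Dj: "0 \<le> Dj" "Dj \<le> E * t\<^sup>2"
  shows "(X * (j * (2 * X) ^ (j - 1)) + X * (Dj * ((2 * (\<kappa> * X ^ j) / Q + 2) * (2 * (t / X) * Q + 2)))
            + (2 * X) ^ j / (t / X)) * t
         \<le> (j * 2 ^ j + 2 ^ j + 24 * E * \<kappa> + 12 * E * 2 ^ Suc j) * X ^ Suc j"
proof -
  have "t \<le> t ^ 4" using t by (simp add: power_increasing[of 1 4 t, simplified])
  with t_X have t_le: "t \<le> 2 * X" by linarith
  obtain k where k: "j = Suc k" using j by (cases j) auto
  have "X * (j * (2 * X) ^ (j - 1)) * t = j * 2 ^ k * X ^ j * t"
    by (simp add: k power_mult_distrib algebra_simps)
  also have "\<dots> \<le> j * 2 ^ k * X ^ j * (2 * X)"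
    using t_le X by (intro mult_left_mono) auto
  finally have "X * (j * (2 * X) ^ (j - 1)) * t \<le> j * 2 ^ j * X ^ Suc j"
    by (simp add: k mult_ac)
  moreover have "(2 * X) ^ j / (t / X) * t = 2 ^ j * X ^ Suc j"
    using X t by (simp add: power_mult_distrib)
  ultimately show ?thesis
    using small_sine_term_le[OF X t Q t_X t_Q X_Q \<kappa> Dj] by (simp add: algebra_simps)
qed

lemma powr_bounds_of_length_bound:
  fixes q :: nat and X \<epsilon> :: real
  assumes "q > 0" "\<epsilon> > 0" "real q powr (1 / Suc j + \<epsilon>) \<le> X"
  shows "real q powr \<epsilon> \<le> X" "real q powr (1 + \<epsilon>) \<le> X ^ Suc j"
proof -
  have q: "real q \<ge> 1" using assms(1) by simp
  show "real q powr \<epsilon> \<le> X"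
    using assms(3) powr_mono[OF _ q, of \<epsilon> "1 / Suc j + \<epsilon>"] by simp
  have "(1 / Suc j + \<epsilon>) * Suc j = 1 + \<epsilon> + \<epsilon> * j"
    by (simp add: field_simps)
  then have "real q powr (1 + \<epsilon>) \<le> real q powr ((1 / Suc j + \<epsilon>) * Suc j)"
    using assms(2) by (intro powr_mono q) simp
  also have "\<dots> = (real q powr (1 / Suc j + \<epsilon>)) ^ Suc j"
    using q by (subst powr_realpow[symmetric]) (simp_all add: powr_powr)
  also have "\<dots> \<le> X ^ Suc j"
    using assms(3) by (intro power_mono) auto
  finally show "real q powr (1 + \<epsilon>) \<le> X ^ Suc j" .
qed

lemma card_shift_range_divisors_le:
  fixes C \<rho> :: real
  assumes "\<And>m::int. m \<noteq> 0 \<Longrightarrow> card {h. h \<noteq> 0 \<and> h dvd m} \<le> C * \<bar>m\<bar> powr \<rho>"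
    and "C \<ge> 0" "\<rho> \<ge> 0" "m \<noteq> 0" "\<bar>m\<bar> \<le> B"
  shows "card {h \<in> shift_range H. h \<noteq> 0 \<and> h dvd m} \<le> C * real_of_int B powr \<rho>"
proof -
  have "card {h \<in> shift_range H. h \<noteq> 0 \<and> h dvd m} \<le> card {h. h \<noteq> 0 \<and> h dvd m}"
    using assms(4) by (intro card_mono) (auto intro: finite_subset[OF _ finite_divisors_int])
  then have "card {h \<in> shift_range H. h \<noteq> 0 \<and> h dvd m} \<le> C * \<bar>m\<bar> powr \<rho>"
    using assms(1)[OF assms(4)] by linarith
  also have "\<dots> \<le> C * real_of_int B powr \<rho>"
    using assms by (intro mult_left_mono powr_mono2) auto
  finally show ?thesis .
qed

lemma divisor_bound_power_le:
  fixes \<kappa> C \<rho> :: real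
  assumes "\<kappa> > 0" "C \<ge> 0" "\<rho> \<ge> 0" "H \<ge> 1" "H \<le> 2 * q"
  shows "(C * (\<kappa> * real H ^ j) powr \<rho>) ^ j \<le> C ^ j * (\<kappa> * 2 ^ j) powr (j * \<rho>) * real q powr (j * (j * \<rho>))"
proof -
  have "real H ^ j \<le> (2 * real q) ^ j"
    using assms(5) by (intro power_mono) auto
  then have H_q: "\<kappa> * real H ^ j \<le> (\<kappa> * 2 ^ j) * real q ^ j"
    using assms(1) by (simp add: power_mult_distrib)
  have "(C * (\<kappa> * real H ^ j) powr \<rho>) ^ j = C ^ j * (\<kappa> * real H ^ j) powr (j * \<rho>)"
    using assms(1,4) powr_power[of "\<kappa> * real H ^ j" \<rho> j] by (simp add: power_mult_distrib)
  also have "\<dots> \<le> C ^ j * ((\<kappa> * 2 ^ j) * real q ^ j) powr (j * \<rho>)"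
    using H_q assms by (intro mult_left_mono powr_mono2) auto
  also have "\<dots> = C ^ j * (\<kappa> * 2 ^ j) powr (j * \<rho>) * real q powr (j * (j * \<rho>))"
    using assms(1,4,5) by (simp add: powr_mult powr_realpow[symmetric] powr_powr mult_ac)
  finally show ?thesis .
qed

lemma differencing_sum_saving:
  fixes \<epsilon> :: real and c :: int
  assumes "j \<ge> 1" "\<epsilon> > 0" "c \<noteq> 0"
  obtains K where "K \<ge> 0"
    "\<And>q H. q > 0 \<Longrightarrow> real q powr (1 / Suc j + \<epsilon>) \<le> 2 * real H \<Longrightarrow> H \<le> 2 * q \<Longrightarrow>
       differencing_sum H j c (linear_sum_bound q H) * q powr (\<epsilon> / 4) \<le> K * real H ^ Suc j"
proof -
  define \<rho> where "\<rho> = \<epsilon> / (2 * j\<^sup>2)"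
  have "\<rho> > 0" using assms by (simp add: \<rho>_def)
  then obtain C where C: "C \<ge> 1" "\<And>m::int. m \<noteq> 0 \<Longrightarrow> card {h. h \<noteq> 0 \<and> h dvd m} \<le> C * \<bar>m\<bar> powr \<rho>"
    using int_divisor_count_bound by blast
  define \<kappa> :: real where "\<kappa> = \<bar>c\<bar> * fact (Suc j)"
  define E where "E = C ^ j * (\<kappa> * 2 ^ j) powr (j * \<rho>)"
  define K where "K = real j * 2 ^ j + 2 ^ j + 24 * E * \<kappa> + 12 * E * 2 ^ Suc j"
  have "\<kappa> > 0" "E \<ge> 0" using assms(3) C(1) by (simp_all add: \<kappa>_def E_def)
  show thesis
  proof
    show "K \<ge> 0" using \<open>\<kappa> > 0\<close> \<open>E \<ge> 0\<close> by (simp add: K_def)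
    fix q H :: nat
    assume q: "q > 0" and lower: "real q powr (1 / Suc j + \<epsilon>) \<le> 2 * real H" and upper: "H \<le> 2 * q"
    define t where "t = real q powr (\<epsilon> / 4)"
    define B where "B = \<bar>c\<bar> * int (fact (Suc j) * H ^ j)"
    define D where "D = C * (\<kappa> * real H ^ j) powr \<rho>"
    have B: "real_of_int B = \<kappa> * real H ^ j" by (simp add: B_def \<kappa>_def algebra_simps)
    have "1 \<le> real q powr (1 / Suc j + \<epsilon>)" using q assms by (simp add: ge_one_powr_ge_zero)
    then have "H \<ge> 1" using lower by linarith
    have t_ge: "t \<ge> 1" using q assms by (simp add: t_def ge_one_powr_ge_zero)
    have t4: "t ^ 4 = real q powr \<epsilon>" "t\<^sup>2 = real q powr (j * (j * \<rho>))"
      using q assms(1)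
      by (simp_all add: t_def \<rho>_def powr_realpow[symmetric] powr_powr power2_eq_square powr_add[symmetric])
    have "D ^ j \<le> E * t\<^sup>2"
      unfolding D_def E_def t4 using divisor_bound_power_le[OF \<open>\<kappa> > 0\<close> _ _ \<open>H \<ge> 1\<close> upper] C(1) \<open>\<rho> > 0\<close>
      by simp
    moreover have divisors: "real (card {h \<in> shift_range H. h \<noteq> 0 \<and> h dvd m}) \<le> D"
      if "m \<noteq> 0" "\<bar>m\<bar> \<le> B" for m
      unfolding D_def B[symmetric] using C that \<open>\<rho> > 0\<close> by (intro card_shift_range_divisors_le) auto
    ultimately have "differencing_sum H j c (linear_sum_bound q H) * t
           \<le> (H * (j * (2 * real H) ^ (j - 1))
               + H * (D ^ j * ((2 * (\<kappa> * real H ^ j) / q + 2) * (2 * (t / H) * q + 2)))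
               + (2 * real H) ^ j / (t / H)) * t"
      using differencing_sum_linear_sum_bound_le[OF q _ assms(3) _ B_def divisors, of "t / H"]
        t_ge \<open>H \<ge> 1\<close> C(1)
      by (intro mult_right_mono) (auto simp: B D_def)
    also have "\<dots> \<le> K * real H ^ Suc j"
      unfolding K_def
      using \<open>H \<ge> 1\<close> t_ge q upper \<open>\<kappa> > 0\<close> \<open>D ^ j \<le> E * t\<^sup>2\<close> C(1)
        powr_bounds_of_length_bound[OF q assms(2) lower]
      by (intro differencing_terms_saving assms(1)) (auto simp: D_def t4 powr_add)
    finally show "differencing_sum H j c (linear_sum_bound q H) * q powr (\<epsilon> / 4) \<le> K * real H ^ Suc j"
      by (simp add: t_def)
  qed
qed

lemma le_of_power_saving:
  fixes S G K X Q \<epsilon> :: real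
  assumes "S \<ge> 0" "X \<ge> 0" "Q > 0" "K \<ge> 0"
    and S: "S ^ 2 ^ j \<le> (2 * X) ^ (2 ^ j - j - 1) * G"
    and G: "G * Q powr (\<epsilon> / 4) \<le> K * X ^ Suc j"
  shows "S \<le> 2 * max 1 K * X * Q powr - (\<epsilon> / (4 * 2 ^ j))"
proof -
  define n :: nat where "n = 2 ^ j"
  define K1 where "K1 = max 1 K"
  define t where "t = Q powr (\<epsilon> / 4)"
  have "t > 0" using assms(3) by (simp add: t_def)
  have "n - j - 1 + Suc j = n" using less_exp[of j] unfolding n_def by linarith
  then have X_pow: "X ^ (n - j - 1) * X ^ Suc j = X ^ n"
    by (simp only: power_add[symmetric])
  have "K1 ^ 1 \<le> K1 ^ n" by (rule power_increasing) (auto simp: n_def K1_def)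
  then have "K \<le> K1 ^ n" by (simp add: K1_def)
  have "S ^ n * t \<le> (2 * X) ^ (n - j - 1) * (G * t)"
    using S \<open>t > 0\<close> by (simp add: n_def mult.assoc)
  also have "\<dots> \<le> (2 * X) ^ (n - j - 1) * (K * X ^ Suc j)"
    using G assms(2) by (intro mult_left_mono) (simp_all add: t_def)
  also have "\<dots> = 2 ^ (n - j - 1) * K * X ^ n"
    using X_pow by (simp add: power_mult_distrib mult_ac)
  also have "\<dots> \<le> 2 ^ n * K1 ^ n * X ^ n"
    using \<open>K \<le> K1 ^ n\<close> assms(2,4) by (intro mult_right_mono mult_mono power_increasing) auto
  also have "\<dots> = (2 * K1 * X * Q powr - (\<epsilon> / (4 * 2 ^ j))) ^ n * t"
  proof -
    have "(Q powr - (\<epsilon> / (4 * 2 ^ j))) ^ n = Q powr - (\<epsilon> / 4)"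
      using assms(3) by (simp add: n_def powr_power)
    then show ?thesis
      using assms(3) by (simp add: t_def power_mult_distrib powr_add[symmetric])
  qed
  finally have "S ^ n \<le> (2 * K1 * X * Q powr - (\<epsilon> / (4 * 2 ^ j))) ^ n"
    using \<open>t > 0\<close> by simp
  then show ?thesis
    using assms(1,2) by (simp add: n_def K1_def)
qed

lemma weyl_sum_short_interval_bound:
  fixes g :: "int poly" and \<epsilon> :: real
  assumes "degree g = Suc j" "j \<ge> 1" "\<epsilon> > 0"
  obtains K where "K \<ge> 0"
    "\<And>q H lo. q > 0 \<Longrightarrow> real q powr (1 / Suc j + \<epsilon>) \<le> 2 * real H \<Longrightarrow> H \<le> 2 * q \<Longrightarrow>
       norm (weyl_sum q g {lo..<lo + int H}) \<le> K * H * q powr - (\<epsilon> / (4 * 2 ^ j))"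
proof -
  define c where "c = coeff g (Suc j)"
  have "g \<noteq> 0" using assms(1) by auto
  then have "c \<noteq> 0" using assms(1) leading_coeff_neq_0[of g] by (simp add: c_def)
  then obtain K where K: "K \<ge> 0"
    "\<And>q H. q > 0 \<Longrightarrow> real q powr (1 / Suc j + \<epsilon>) \<le> 2 * real H \<Longrightarrow> H \<le> 2 * q \<Longrightarrow>
       differencing_sum H j c (linear_sum_bound q H) * q powr (\<epsilon> / 4) \<le> K * real H ^ Suc j"
    using differencing_sum_saving[OF assms(2,3)] by blast
  show thesis
  proof
    show "2 * max 1 K \<ge> 0" by simp
    fix q H :: nat and lo :: int
    assume q: "q > 0" and lower: "real q powr (1 / Suc j + \<epsilon>) \<le> 2 * real H" and upper: "H \<le> 2 * q"
    have interval: "{lo..<lo + int H} = {lo..lo + int H - 1}" by auto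
    have "norm (weyl_sum q g {lo..<lo + int H}) ^ 2 ^ j
            \<le> (2 * real H) ^ (2 ^ j - j - 1) * differencing_sum H j c (linear_sum_bound q H)"
      unfolding c_def interval by (rule norm_weyl_sum_power_le) (use assms(1) in auto)
    with K q lower upper
    show "norm (weyl_sum q g {lo..<lo + int H}) \<le> 2 * max 1 K * H * q powr - (\<epsilon> / (4 * 2 ^ j))"
      by (intro le_of_power_saving) auto
  qed
qed

lemma norm_weyl_sum_split_le:
  "norm (weyl_sum q p {lo..<lo + int (a + b)})
     \<le> norm (weyl_sum q p {lo..<lo + int a}) + norm (weyl_sum q p {lo + int a..<lo + int a + int b})"
proof -
  have "{lo..<lo + int (a + b)} = {lo..<lo + int a} \<union> {lo + int a..<lo + int a + int b}"
    by auto
  then have "weyl_sum q p {lo..<lo + int (a + b)}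
               = weyl_sum q p {lo..<lo + int a} + weyl_sum q p {lo + int a..<lo + int a + int b}"
    unfolding weyl_sum_def by (simp add: sum.union_disjoint)
  then show ?thesis by (simp add: norm_triangle_ineq)
qed

lemma weyl_sum_interval_bound:
  fixes g :: "int poly" and \<epsilon> :: real
  assumes "degree g = Suc j" "j \<ge> 1" "\<epsilon> > 0" "\<epsilon> \<le> 1 / 2"
  obtains K where "K \<ge> 0"
    "\<And>q L lo. q > 0 \<Longrightarrow> real q powr (1 / Suc j + \<epsilon>) \<le> 2 * real L \<Longrightarrow>
       norm (weyl_sum q g {lo..<lo + int L}) \<le> K * L * q powr - (\<epsilon> / (4 * 2 ^ j))"
proof -
  define \<eta> where "\<eta> = \<epsilon> / (4 * 2 ^ j)"
  obtain K where K: "K \<ge> 0"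
    "\<And>q H lo. q > 0 \<Longrightarrow> real q powr (1 / Suc j + \<epsilon>) \<le> 2 * real H \<Longrightarrow> H \<le> 2 * q \<Longrightarrow>
       norm (weyl_sum q g {lo..<lo + int H}) \<le> K * H * q powr - \<eta>"
    unfolding \<eta>_def using weyl_sum_short_interval_bound[OF assms(1-3)] by blast
  have "1 / Suc j \<le> 1 / 2" using assms(2) by (simp add: field_simps)
  then have exponent_le_1: "1 / Suc j + \<epsilon> \<le> 1" using assms(4) by linarith
  show thesis
  proof (rule that[OF K(1)], unfold \<eta>_def[symmetric])
    fix q L :: nat and lo :: int
    assume q: "q > 0" and "real q powr (1 / Suc j + \<epsilon>) \<le> 2 * real L"
    have q_powr: "real q powr (1 / Suc j + \<epsilon>) \<le> q"
      using q exponent_le_1 powr_mono[of "1 / Suc j + \<epsilon>" 1 q] by simp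
    then show "norm (weyl_sum q g {lo..<lo + int L}) \<le> K * L * q powr - \<eta>"
      using \<open>real q powr (1 / Suc j + \<epsilon>) \<le> 2 * real L\<close>
    proof (induction L arbitrary: lo rule: less_induct)
      case (less L)
      show ?case
      proof (cases "L \<le> 2 * q")
        case False
        then have "q + (L - q) = L" by simp
        then have "norm (weyl_sum q g {lo..<lo + int L})
                \<le> norm (weyl_sum q g {lo..<lo + int q})
                  + norm (weyl_sum q g {lo + int q..<lo + int q + int (L - q)})"
          using norm_weyl_sum_split_le[of q g lo q "L - q"] by simp
        also have "\<dots> \<le> K * q * q powr - \<eta> + K * (L - q) * q powr - \<eta>"
        proof (rule add_mono)
          show "norm (weyl_sum q g {lo..<lo + int q}) \<le> K * q * q powr - \<eta>"
            using K(2)[OF q, of q] q_powr by simp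
          show "norm (weyl_sum q g {lo + int q..<lo + int q + int (L - q)}) \<le> K * (L - q) * q powr - \<eta>"
            using False q q_powr by (intro less.IH) (auto simp: of_nat_diff)
        qed
        also have "\<dots> = K * L * q powr - \<eta>"
          using False by (simp add: algebra_simps of_nat_diff)
        finally show ?thesis .
      qed (use K(2)[OF q less.prems(2)] in simp)
    qed
  qed
qed

lemma integers_in_interval:
  fixes a N :: real
  assumes "N \<ge> 1"
  obtains lo :: int and L :: nat
  where "{n::int. a \<le> n \<and> n \<le> a + N} = {lo..<lo + int L}" "N \<le> 2 * real L" "L \<le> N + 1"
proof
  define L where "L = nat (\<lfloor>a + N\<rfloor> - \<lceil>a\<rceil> + 1)"
  have bounds: "N - 1 < \<lfloor>a + N\<rfloor> - \<lceil>a\<rceil> + 1" "\<lfloor>a + N\<rfloor> - \<lceil>a\<rceil> + 1 \<le> N + 1"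
    using floor_correct[of "a + N"] ceiling_correct[of a] by linarith+
  then have L: "real L = \<lfloor>a + N\<rfloor> - \<lceil>a\<rceil> + 1"
    using assms by (simp add: L_def)
  show "{n::int. a \<le> n \<and> n \<le> a + N} = {\<lceil>a\<rceil>..<\<lceil>a\<rceil> + int L}"
    using bounds assms by (auto simp: L_def ceiling_le_iff le_floor_iff)
  have "L \<ge> 1" using L bounds assms by simp
  then show "N \<le> 2 * real L" "L \<le> N + 1"
    using L bounds by linarith+
qed

lemma weyl_sum_real_interval_bound:
  fixes g :: "int poly" and \<epsilon> :: real
  assumes "degree g = Suc j" "j \<ge> 1" "\<epsilon> > 0" "\<epsilon> \<le> 1 / 2"
  obtains K where
    "\<And>q (a::real) N. q > 0 \<Longrightarrow> real q powr (1 / Suc j + \<epsilon>) \<le> N \<Longrightarrow>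
       norm (weyl_sum q g {n. a \<le> n \<and> n \<le> a + N}) \<le> K * N * q powr - (\<epsilon> / (4 * 2 ^ j))"
proof -
  obtain K where K: "K \<ge> 0"
    "\<And>q L lo. q > 0 \<Longrightarrow> real q powr (1 / Suc j + \<epsilon>) \<le> 2 * real L \<Longrightarrow>
       norm (weyl_sum q g {lo..<lo + int L}) \<le> K * L * q powr - (\<epsilon> / (4 * 2 ^ j))"
    using weyl_sum_interval_bound[OF assms] by blast
  show thesis
  proof
    fix q :: nat and a N :: real
    assume q: "q > 0" and N: "real q powr (1 / Suc j + \<epsilon>) \<le> N"
    have "1 \<le> real q powr (1 / Suc j + \<epsilon>)"
      using q assms(3) by (simp add: ge_one_powr_ge_zero)
    with N have "N \<ge> 1" by linarith
    then obtain lo L where I: "{n::int. a \<le> n \<and> n \<le> a + N} = {lo..<lo + int L}"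
      and "N \<le> 2 * real L" "L \<le> N + 1"
      using integers_in_interval by blast
    with N have "real q powr (1 / Suc j + \<epsilon>) \<le> 2 * real L" by linarith
    then have "norm (weyl_sum q g {lo..<lo + int L}) \<le> K * L * q powr - (\<epsilon> / (4 * 2 ^ j))"
      by (rule K(2)[OF q])
    also have "\<dots> \<le> K * (2 * N) * q powr - (\<epsilon> / (4 * 2 ^ j))"
      using \<open>L \<le> N + 1\<close> \<open>N \<ge> 1\<close> K(1) by (intro mult_right_mono mult_left_mono) auto
    finally show "norm (weyl_sum q g {n::int. a \<le> n \<and> n \<le> a + N}) \<le> 2 * K * N * q powr - (\<epsilon> / (4 * 2 ^ j))"
      by (simp add: I mult_ac)
  qed
qed

theorem proposition8p2:
  fixes \<epsilon> :: real and d :: nat and g :: "int poly"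
  assumes "\<epsilon> > 0" and "d \<ge> 2" and "degree g = d"
  shows "\<exists>\<eta>>0. \<exists>C. \<forall>q::nat. q > 0 \<longrightarrow>
           (\<forall>(a::real) (N::real). N \<ge> real q powr (1 / real d + \<epsilon>) \<longrightarrow>
              norm (\<Sum>n \<in> {n::int. a \<le> real_of_int n \<and> real_of_int n \<le> a + N}.
                       e (real_of_int (poly g n) / real q))
              \<le> C * N / real q powr \<eta>)"
proof -
  define j where "j = d - 1"
  define \<epsilon>' where "\<epsilon>' = min \<epsilon> (1 / 2)"
  define \<eta> where "\<eta> = \<epsilon>' / (4 * 2 ^ j)"
  have d: "d = Suc j" "j \<ge> 1" using assms(2) by (auto simp: j_def)
  have "\<epsilon>' > 0" "\<epsilon>' \<le> 1 / 2" "\<epsilon>' \<le> \<epsilon>" using assms(1) by (auto simp: \<epsilon>'_def)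
  then obtain K where K: "\<And>q (a::real) N. q > 0 \<Longrightarrow> real q powr (1 / d + \<epsilon>') \<le> N \<Longrightarrow>
       norm (weyl_sum q g {n::int. a \<le> n \<and> n \<le> a + N}) \<le> K * N * q powr - \<eta>"
    using weyl_sum_real_interval_bound[of g j \<epsilon>'] assms(3) d unfolding \<eta>_def by auto
  have "norm (weyl_sum q g {n::int. a \<le> n \<and> n \<le> a + N}) \<le> K * N / q powr \<eta>"
    if "q > 0" and "N \<ge> q powr (1 / d + \<epsilon>)" for q :: nat and a N :: real
    using K[where q = q and a = a and N = N] that powr_mono[of "1 / d + \<epsilon>'" "1 / d + \<epsilon>" q] \<open>\<epsilon>' \<le> \<epsilon>\<close>
    by (simp add: powr_minus divide_inverse)
  moreover have "\<eta> > 0" using \<open>\<epsilon>' > 0\<close> by (simp add: \<eta>_def)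
  ultimately show ?thesis unfolding weyl_sum_def by blast
qed

end
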